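(* Let $q\ge5$ and $\mu\in\mathbb{F}_q\setminus\{0,1\}$. Let $\ell_\mu$ be the line through $R_{\mu,0}=\mathbf{P}(0,\mu,0,1)$ and $R_{\mu,\infty}=\mathbf{P}(1,0,1,0)$, so $\ell_\mu=\{R_{\mu,\gamma}:\gamma\in\mathbb{F}_q\}\cup\{R_{\mu,\infty}\}$ with $R_{\mu,\gamma}=\mathbf{P}(\gamma,\mu,\gamma,1)$. Then: (i) $\ell_\mu$ has no point on $\mathscr{C}$; (ii) $\ell_\mu$ is not a chord of $\mathscr{C}$; (iii) $\ell_\mu$ is contained in neither $\pi_{osc}(\infty)$ nor $\pi_{osc}(0)$; more precisely $R_{\mu,\gamma}\notin\pi_{osc}(\infty)$ for all $\gamma\in\mathbb{F}_q$, $R_{\mu,\infty}\notin\pi_{osc}(0)$, and $R_{\mu,\infty}\in\pi_{osc}(\infty)$; (iv) if $R_{\mu,\infty}\notin\pi_{osc}(t)$ for all $t\in\mathbb{F}_q$, then $\ell_\mu$ is not contained in any osculating plane; (v) for $t\in\mathbb{F}_q$, $R_{\mu,\infty}\in\pi_{osc}(t)$ if and only if $3t^2+1=0$.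
   Context: Points of $\mathrm{PG}(3,q)$ are written $\mathbf{P}(x_0,x_1,x_2,x_3)$ over $\mathbb{F}_q$. For $t$ in $\mathbb{F}_q$ or $\mathbb{F}_{q^2}$ put $P(t)=\mathbf{P}(t^3,t^2,t,1)$ and $P(\infty)=\mathbf{P}(1,0,0,0)$; the twisted cubic is $\mathscr{C}=\{P(t):t\in\mathbb{F}_q\cup\{\infty\}\}$. The osculating plane $\pi_{osc}(t)$ is $x_0-3tx_1+3t^2x_2-t^3x_3=0$ for $t\in\mathbb{F}_q$ and $\pi_{osc}(\infty)$ is $x_3=0$. A chord of $\mathscr{C}$ is a real chord (line joining two distinct points of $\mathscr{C}$), a tangent (line through $P(t)$ and $\mathbf{P}(3t^2,2t,1,0)$ for $t\in\mathbb{F}_q$, or through $P(\infty)$ and $\mathbf{P}(0,1,0,0)$), or an imaginary chord (line of $\mathrm{PG}(3,q)$ joining $P(t_1),P(t_2)$ with $t_1,t_2=t_1^q\in\mathbb{F}_{q^2}\setminus\mathbb{F}_q$). *)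

theory Defs
  imports Main "HOL-Library.Cardinality"
begin

text \<open>Vectors of F^4 are quadruples; a point of PG(3,q) is the set of nonzero
scalar multiples of a nonzero vector (its class). Lines and planes are sets of points.\<close>

type_synonym 'a vec4 = "'a \<times> 'a \<times> 'a \<times> 'a"

definition vsmult :: "'a::field \<Rightarrow> 'a vec4 \<Rightarrow> 'a vec4" where
  "vsmult c v = (case v of (x0,x1,x2,x3) \<Rightarrow> (c*x0, c*x1, c*x2, c*x3))"

definition vadd :: "'a::field vec4 \<Rightarrow> 'a vec4 \<Rightarrow> 'a vec4" where
  "vadd u v = (case u of (x0,x1,x2,x3) \<Rightarrow> case v of (y0,y1,y2,y3) \<Rightarrow>
                 (x0+y0, x1+y1, x2+y2, x3+y3))"

definition vmap :: "('a \<Rightarrow> 'b) \<Rightarrow> 'a vec4 \<Rightarrow> 'b vec4" where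
  "vmap f v = (case v of (x0,x1,x2,x3) \<Rightarrow> (f x0, f x1, f x2, f x3))"

text \<open>The point \<open>P(x0,x1,x2,x3)\<close> of PG(3,q) (meaningful for nonzero vectors).\<close>
definition proj_pt :: "'a::field vec4 \<Rightarrow> 'a vec4 set" where
  "proj_pt v = {vsmult c v | c. c \<noteq> 0}"

definition line_through :: "'a::field vec4 \<Rightarrow> 'a vec4 \<Rightarrow> 'a vec4 set set" where
  "line_through u v = {proj_pt (vadd (vsmult a u) (vsmult b v)) | a b.
                          vadd (vsmult a u) (vsmult b v) \<noteq> (0,0,0,0)}"

definition Pv :: "'a::field \<Rightarrow> 'a vec4" where
  "Pv t = (t^3, t^2, t, 1)"

definition Pt :: "'a::field \<Rightarrow> 'a vec4 set" where
  "Pt t = proj_pt (Pv t)"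

definition Pinf :: "'a::field vec4 set" where
  "Pinf = proj_pt (1,0,0,0)"

definition cubic :: "'a::field vec4 set set" where
  "cubic = range Pt \<union> {Pinf}"

definition osc :: "'a::field \<Rightarrow> 'a vec4 set set" where
  "osc t = {proj_pt (x0,x1,x2,x3) | x0 x1 x2 x3. (x0,x1,x2,x3) \<noteq> (0,0,0,0) \<and>
                x0 - 3*t*x1 + 3*t^2*x2 - t^3*x3 = 0}"

definition osc_inf :: "'a::field vec4 set set" where
  "osc_inf = {proj_pt (x0,x1,x2,x3) | x0 x1 x2 x3. (x0,x1,x2,x3) \<noteq> (0,0,0,0) \<and> x3 = 0}"

definition real_chord :: "'a::field vec4 set set \<Rightarrow> bool" where
  "real_chord L \<longleftrightarrow> (\<exists>u v. u \<noteq> (0,0,0,0) \<and> v \<noteq> (0,0,0,0) \<and>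
      proj_pt u \<in> cubic \<and> proj_pt v \<in> cubic \<and> proj_pt u \<noteq> proj_pt v \<and> L = line_through u v)"

definition tangent :: "'a::field vec4 set set \<Rightarrow> bool" where
  "tangent L \<longleftrightarrow> (\<exists>t. L = line_through (Pv t) (3*t^2, 2*t, 1, 0))
                 \<or> L = line_through (1,0,0,0) (0,1,0,0)"

text \<open>Imaginary chords, relative to a field \<open>'b\<close> together with an embedding
\<open>emb\<close> of \<open>F_q\<close> into it (intended: \<open>'b = F_{q^2}\<close>). The line of PG(3,q)
joining \<open>P(t1)\<close>, \<open>P(t1^q)\<close> is the set of points of PG(3,q) whose representatives,
viewed over \<open>'b\<close>, lie in the \<open>'b\<close>-span of \<open>P(t1)\<close> and \<open>P(t1^q)\<close>.\<close>
definition imag_chord :: "('a::{finite,field} \<Rightarrow> 'b::field) \<Rightarrow> 'a vec4 set set \<Rightarrow> bool" where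
  "imag_chord emb L \<longleftrightarrow> (\<exists>t1::'b. t1 \<notin> range emb \<and>
      L = {proj_pt x | x. x \<noteq> (0,0,0,0) \<and>
             (\<exists>a b. vmap emb x = vadd (vsmult a (Pv t1)) (vsmult b (Pv (t1 ^ CARD('a)))))})"

definition chord :: "('a::{finite,field} \<Rightarrow> 'b::field) \<Rightarrow> 'a vec4 set set \<Rightarrow> bool" where
  "chord emb L \<longleftrightarrow> real_chord L \<or> tangent L \<or> imag_chord emb L"

end

theory Submission
  imports Defs "HOL-Computational_Algebra.Polynomial"
begin

(* A point P(t) of the twisted cubic on l_\<mu> would satisfy t = t^3 and t^2 = \<mu>, forcing
   \<mu> \<in> {0, 1}; so l_\<mu> misses the cubic and is neither a real chord nor a tangent, both of
   which contain points of the cubic. It is not an imaginary chord because R_{\<mu>,\<infinity>} = P(1,0,1,0)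
   lies on none: writing (1,0,1,0) as a P(t) + b P(t^q) with t \<noteq> t^q forces t^2 = 1, so
   t = \<plusminus>1 lies in F_q, whereas t^q \<noteq> t for t outside F_q because the q elements of F_q
   already exhaust the roots of X^q - X. *)

lemma vsmult_quadruple [simp]: "vsmult c (x0, x1, x2, x3) = (c * x0, c * x1, c * x2, c * x3)"
  by (simp add: vsmult_def)

lemma vadd_quadruple [simp]:
  "vadd (x0, x1, x2, x3) (y0, y1, y2, y3) = (x0 + y0, x1 + y1, x2 + y2, x3 + y3)"
  by (simp add: vadd_def)

lemma vmap_quadruple [simp]: "vmap f (x0, x1, x2, x3) = (f x0, f x1, f x2, f x3)"
  by (simp add: vmap_def)

lemma vsmult_vsmult: "vsmult c (vsmult d v) = vsmult (c * d) v"
  by (cases v) (simp add: mult.assoc)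

lemma proj_pt_eq_iff: "proj_pt u = proj_pt v \<longleftrightarrow> (\<exists>c. c \<noteq> 0 \<and> u = vsmult c v)"
proof
  have self: "w \<in> proj_pt w" for w :: "'a vec4"
    unfolding proj_pt_def by (cases w) (auto intro: exI[of _ 1])
  show "proj_pt u = proj_pt v \<Longrightarrow> \<exists>c. c \<noteq> 0 \<and> u = vsmult c v"
    using self[of u] unfolding proj_pt_def by auto
next
  assume "\<exists>c. c \<noteq> 0 \<and> u = vsmult c v"
  then obtain c where c: "c \<noteq> 0" "u = vsmult c v" by blast
  have "vsmult d u = vsmult (d * c) v" "vsmult d v = vsmult (d / c) u" for d
    using c by (simp_all add: vsmult_vsmult)
  with c(1) show "proj_pt u = proj_pt v"
    unfolding proj_pt_def by (auto 0 3 intro: exI[of _ "_ * c"] exI[of _ "_ / c"])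
qed

lemma proj_pt_vsmult: "c \<noteq> 0 \<Longrightarrow> proj_pt (vsmult c v) = proj_pt v"
  unfolding proj_pt_eq_iff by blast

lemma proj_pt_in_line_throughI:
  "vadd (vsmult a u) (vsmult b v) = w \<Longrightarrow> w \<noteq> (0, 0, 0, 0) \<Longrightarrow> proj_pt w \<in> line_through u v"
  unfolding line_through_def by blast

lemma proj_pt_in_line_through: "u \<noteq> (0, 0, 0, 0) \<Longrightarrow> proj_pt u \<in> line_through u v"
  by (rule proj_pt_in_line_throughI[of 1 u 0]) (cases u, cases v, simp)

lemma proj_pt_in_cubicE:
  assumes "proj_pt x \<in> cubic"
  obtains t c where "c \<noteq> 0" "x = vsmult c (Pv t)"
    | c where "c \<noteq> 0" "x = vsmult c (1, 0, 0, 0)"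
  using assms unfolding cubic_def Pt_def Pinf_def by (auto simp: proj_pt_eq_iff)

lemma proj_pt_in_osc_iff:
  "proj_pt (x0, x1, x2, x3) \<in> osc t \<longleftrightarrow>
     (x0, x1, x2, x3) \<noteq> (0, 0, 0, 0) \<and> x0 - 3*t*x1 + 3*t^2*x2 - t^3*x3 = 0"
proof
  assume "proj_pt (x0, x1, x2, x3) \<in> osc t"
  then obtain y0 y1 y2 y3 where y: "proj_pt (x0, x1, x2, x3) = proj_pt (y0, y1, y2, y3)"
    "(y0, y1, y2, y3) \<noteq> (0, 0, 0, 0)" "y0 - 3*t*y1 + 3*t^2*y2 - t^3*y3 = 0"
    unfolding osc_def by blast
  then obtain c where "c \<noteq> 0" "(x0, x1, x2, x3) = vsmult c (y0, y1, y2, y3)"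
    unfolding proj_pt_eq_iff by blast
  moreover have "c * (y0 - 3*t*y1 + 3*t^2*y2 - t^3*y3) = 0"
    using y(3) by simp
  ultimately show "(x0, x1, x2, x3) \<noteq> (0, 0, 0, 0) \<and> x0 - 3*t*x1 + 3*t^2*x2 - t^3*x3 = 0"
    using y(2) by (auto simp: algebra_simps)
qed (auto simp: osc_def)

lemma proj_pt_in_osc_inf_iff:
  "proj_pt (x0, x1, x2, x3) \<in> osc_inf \<longleftrightarrow> (x0, x1, x2, x3) \<noteq> (0, 0, 0, 0) \<and> x3 = 0"
proof
  assume "proj_pt (x0, x1, x2, x3) \<in> osc_inf"
  then obtain y0 y1 y2 where y: "proj_pt (x0, x1, x2, x3) = proj_pt (y0, y1, y2, 0)"
    "(y0, y1, y2, 0) \<noteq> (0, 0, 0, 0)"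
    unfolding osc_inf_def by blast
  then show "(x0, x1, x2, x3) \<noteq> (0, 0, 0, 0) \<and> x3 = 0"
    unfolding proj_pt_eq_iff by auto
qed (auto simp: osc_inf_def)

lemma finite_field_power_card:
  fixes x :: "'a::{finite,field}"
  shows "x ^ CARD('a) = x"
proof (cases "x = 0")
  case True
  then show ?thesis by simp
next
  case False
  let ?U = "UNIV - {0 :: 'a}"
  have "(\<Prod>y\<in>?U. x * y) = (\<Prod>y\<in>?U. y)"
    by (rule prod.reindex_bij_witness[of _ "\<lambda>y. y / x" "\<lambda>y. x * y"]) (use False in auto)
  then have "x ^ card ?U = 1"
    by (simp add: prod.distrib)
  have "CARD('a) = Suc (card ?U)"
    using finite_UNIV_card_ge_0[where 'a = 'a] by (simp add: card_Diff_subset)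
  then have "x ^ CARD('a) = x * x ^ card ?U"
    by (simp only: power_Suc)
  with \<open>x ^ card ?U = 1\<close> show ?thesis
    by simp
qed

locale field_hom =
  fixes emb :: "'a::field \<Rightarrow> 'b::field"
  assumes hom_one: "emb 1 = 1"
    and hom_add: "emb (x + y) = emb x + emb y"
    and hom_mult: "emb (x * y) = emb x * emb y"
begin

lemma hom_zero: "emb 0 = 0"
  using hom_add[of 0 0] by (metis add.right_neutral add_left_cancel)

lemma hom_uminus: "emb (- x) = - emb x"
  using hom_add[of x "- x"] hom_zero by (simp add: eq_neg_iff_add_eq_0 add.commute)

lemma hom_power: "emb (x ^ n) = emb x ^ n"
  by (induction n) (simp_all add: hom_one hom_mult)

lemma hom_eq_0_iff: "emb x = 0 \<longleftrightarrow> x = 0"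
proof
  assume "emb x = 0"
  then have "emb (x * inverse x) = 0"
    by (simp add: hom_mult)
  with hom_one show "x = 0"
    by (cases "x = 0") auto
qed (simp add: hom_zero)

lemma hom_inj: "inj emb"
proof (rule injI)
  fix x y
  assume "emb x = emb y"
  then have "emb (x - y) = 0"
    using hom_add[of "x - y" y] by simp
  then show "x = y"
    by (simp add: hom_eq_0_iff)
qed

end

lemma frobenius_fixed_in_range:
  fixes emb :: "'a::{finite,field} \<Rightarrow> 'b::field"
  assumes "field_hom emb" and fixed: "t ^ CARD('a) = t"
  shows "t \<in> range emb"
proof (rule ccontr)
  interpret field_hom emb by fact
  assume t: "t \<notin> range emb"
  let ?q = "CARD('a)"
  have "card {0, 1 :: 'a} \<le> ?q"
    by (rule card_mono) auto
  then have q: "?q \<noteq> 1"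
    by simp
  define p :: "'b poly" where "p = monom 1 ?q - monom 1 1"
  have "coeff p ?q = 1"
    using q by (simp add: p_def coeff_monom)
  then have "p \<noteq> 0"
    by auto
  have "degree p \<le> ?q"
    unfolding p_def by (rule degree_diff_le) (use q in \<open>auto simp: degree_monom_eq\<close>)
  have "insert t (range emb) \<subseteq> {z. poly p z = 0}"
    using fixed by (auto simp: p_def poly_monom hom_power[symmetric] finite_field_power_card)
  then have "card (insert t (range emb)) \<le> card {z. poly p z = 0}"
    by (rule card_mono[OF poly_roots_finite[OF \<open>p \<noteq> 0\<close>]])
  also have "\<dots> \<le> ?q"
    using card_poly_roots_bound[OF \<open>p \<noteq> 0\<close>] \<open>degree p \<le> ?q\<close> by linarith
  finally show False
    using t hom_inj by (simp add: card_image)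
qed

lemma line_through_ell_mu:
  "line_through (0, \<mu>, 0, 1) (1, 0, 1, 0) =
     {proj_pt (\<gamma>, \<mu>, \<gamma>, 1) | \<gamma>. True} \<union> {proj_pt (1, 0, 1, 0)}"
  (is "?L = ?R")
proof
  show "?L \<subseteq> ?R"
  proof
    fix X
    assume "X \<in> ?L"
    then obtain a b where X: "X = proj_pt (b, a * \<mu>, b, a)" "(b, a * \<mu>, b, a) \<noteq> (0, 0, 0, 0)"
      unfolding line_through_def by auto
    show "X \<in> ?R"
    proof (cases "a = 0")
      case True
      with X have "b \<noteq> 0" "X = proj_pt (vsmult b (1, 0, 1, 0))"
        by simp_all
      then have "X = proj_pt (1, 0, 1, 0)"
        by (metis proj_pt_vsmult)
      then show ?thesis
        by simp
    next
      case False
      with X have "X = proj_pt (vsmult a (b / a, \<mu>, b / a, 1))"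
        by simp
      with False have "X = proj_pt (b / a, \<mu>, b / a, 1)"
        by (metis proj_pt_vsmult)
      then show ?thesis
        by blast
    qed
  qed
  have "proj_pt (\<gamma>, \<mu>, \<gamma>, 1) \<in> ?L" for \<gamma>
    by (rule proj_pt_in_line_throughI[of 1 _ \<gamma>]) simp_all
  moreover have "proj_pt (1, 0, 1, 0) \<in> ?L"
    by (rule proj_pt_in_line_throughI[of 0 _ 1]) simp_all
  ultimately show "?R \<subseteq> ?L"
    by blast
qed

lemma proj_pt_R_mu_gamma_notin_cubic:
  assumes "\<mu> \<noteq> 0" "\<mu> \<noteq> 1"
  shows "proj_pt (\<gamma>, \<mu>, \<gamma>, 1) \<notin> cubic"
proof
  assume "proj_pt (\<gamma>, \<mu>, \<gamma>, 1) \<in> cubic"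
  then show False
  proof (rule proj_pt_in_cubicE)
    fix t c
    assume "(\<gamma>, \<mu>, \<gamma>, 1) = vsmult c (Pv t)"
    then have "\<gamma> = t" "\<mu> = t^2" "t^3 = t"
      by (auto simp: Pv_def)
    then have "\<mu> * (\<mu> - 1) = 0"
      by (simp add: algebra_simps power2_eq_square power3_eq_cube)
    with assms show False
      by simp
  qed simp
qed

lemma proj_pt_R_inf_notin_cubic: "proj_pt (1, 0, 1, 0) \<notin> cubic"
  by (auto elim: proj_pt_in_cubicE simp: Pv_def)

lemma real_chord_meets_cubic: "real_chord L \<Longrightarrow> L \<inter> cubic \<noteq> {}"
  unfolding real_chord_def using proj_pt_in_line_through by blast

lemma tangent_meets_cubic:
  assumes "tangent L"
  shows "L \<inter> cubic \<noteq> {}"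
proof -
  have "proj_pt (Pv t) \<in> cubic \<inter> line_through (Pv t) v" for t v
    by (auto simp: cubic_def Pt_def Pv_def intro: proj_pt_in_line_through)
  moreover have "proj_pt (1, 0, 0, 0) \<in> cubic \<inter> line_through (1, 0, 0, 0) v" for v
    by (auto simp: cubic_def Pinf_def intro: proj_pt_in_line_through)
  ultimately show ?thesis
    using assms unfolding tangent_def by blast
qed

lemma Pv_combination_eq_R_inf_imp_square_eq_1:
  fixes a b t s e :: "'a::field"
  assumes comb: "vadd (vsmult a (Pv t)) (vsmult b (Pv s)) = (e, 0, e, 0)"
    and "e \<noteq> 0" "t \<noteq> s"
  shows "t^2 = 1"
proof -
  from comb have "a + b = 0" and x1: "a * t + b * s = e" and x2: "a * t^2 + b * s^2 = 0"
    and x3: "a * t^3 + b * s^3 = e"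
    by (simp_all add: Pv_def)
  from \<open>a + b = 0\<close> have b: "b = - a"
    by (simp add: eq_neg_iff_add_eq_0 add.commute)
  from x1 b have e: "a * (t - s) = e"
    by (simp add: algebra_simps)
  from x2 b have sum: "a * (t - s) * (t + s) = 0"
    by (simp add: algebra_simps power2_eq_square)
  from x3 b have e': "a * (t - s) * (t^2 + t * s + s^2) = e"
    by (simp add: algebra_simps power2_eq_square power3_eq_cube)
  from e \<open>e \<noteq> 0\<close> have "a \<noteq> 0"
    by auto
  with sum \<open>t \<noteq> s\<close> have "s = - t"
    by (simp add: eq_neg_iff_add_eq_0 add.commute)
  with e e' have "e * t^2 = e * 1"
    by (simp add: power2_eq_square)
  with \<open>e \<noteq> 0\<close> show ?thesis
    by simp
qed

lemma imag_chord_not_through_R_inf: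
  fixes emb :: "'a::{finite,field} \<Rightarrow> 'b::field"
  assumes "field_hom emb" and "imag_chord emb L"
  shows "proj_pt (1, 0, 1, 0) \<notin> L"
proof
  interpret field_hom emb by fact
  assume "proj_pt (1, 0, 1, 0) \<in> L"
  moreover obtain t where t: "t \<notin> range emb" and "L = {proj_pt x | x. x \<noteq> (0, 0, 0, 0) \<and>
      (\<exists>a b. vmap emb x = vadd (vsmult a (Pv t)) (vsmult b (Pv (t ^ CARD('a)))))}"
    using \<open>imag_chord emb L\<close> unfolding imag_chord_def by blast
  ultimately obtain x a b where "proj_pt x = proj_pt (1, 0, 1, 0)"
    and x: "vmap emb x = vadd (vsmult a (Pv t)) (vsmult b (Pv (t ^ CARD('a))))"
    by auto
  then obtain c where "c \<noteq> 0" and "x = (c, 0, c, 0)"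
    by (auto simp: proj_pt_eq_iff)
  with x have "vadd (vsmult a (Pv t)) (vsmult b (Pv (t ^ CARD('a)))) = (emb c, 0, emb c, 0)"
    by (simp add: hom_zero)
  moreover have "emb c \<noteq> 0"
    using \<open>c \<noteq> 0\<close> by (simp add: hom_eq_0_iff)
  moreover have "t \<noteq> t ^ CARD('a)"
    using frobenius_fixed_in_range[OF \<open>field_hom emb\<close>] t by metis
  ultimately have "t^2 = 1"
    by (rule Pv_combination_eq_R_inf_imp_square_eq_1)
  then have "t = emb 1 \<or> t = emb (- 1)"
    by (auto simp: hom_one hom_uminus power2_eq_1_iff)
  with t show False
    by blast
qed

lemma proj_pt_R_inf_in_osc_iff: "proj_pt (1, 0, 1, 0) \<in> osc t \<longleftrightarrow> 3 * t^2 + 1 = 0"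
  by (simp add: proj_pt_in_osc_iff add.commute)

lemma proj_pt_R_inf_in_osc_inf: "proj_pt (1, 0, 1, 0) \<in> osc_inf"
  by (simp add: proj_pt_in_osc_inf_iff)

theorem lemma4p2:
  fixes \<mu> :: "'a::{finite,field}"
    and emb :: "'a \<Rightarrow> 'b::{finite,field}"
  assumes q5: "CARD('a) \<ge> 5"
    and mu: "\<mu> \<noteq> 0" "\<mu> \<noteq> 1"
    and ext_card: "CARD('b) = CARD('a)^2"
    and emb_hom: "emb 0 = 0" "emb 1 = 1" "\<And>x y. emb (x + y) = emb x + emb y"
                 "\<And>x y. emb (x * y) = emb x * emb y"
  defines "L \<equiv> line_through (0, \<mu>, 0, 1) (1, 0, 1, 0)"
  shows "L = {proj_pt (\<gamma>, \<mu>, \<gamma>, 1) | \<gamma>. True} \<union> {proj_pt (1, 0, 1, 0)}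
       \<and> L \<inter> cubic = {}
       \<and> \<not> chord emb L
       \<and> \<not> L \<subseteq> osc_inf \<and> \<not> L \<subseteq> osc 0
       \<and> (\<forall>\<gamma>. proj_pt (\<gamma>, \<mu>, \<gamma>, 1) \<notin> osc_inf)
       \<and> proj_pt (1, 0, 1, 0) \<notin> osc 0
       \<and> proj_pt (1, 0, 1, 0) \<in> osc_inf
       \<and> ((\<forall>t::'a. proj_pt (1, 0, 1, 0) \<notin> osc t) \<longrightarrow>
             (\<forall>t. \<not> L \<subseteq> osc t) \<and> \<not> L \<subseteq> osc_inf)
       \<and> (\<forall>t::'a. proj_pt (1, 0, 1, 0) \<in> osc t \<longleftrightarrow> 3 * t^2 + 1 = 0)"
proof -
  have hom: "field_hom emb"
    using emb_hom(2-4) by unfold_locales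
  have line: "L = {proj_pt (\<gamma>, \<mu>, \<gamma>, 1) | \<gamma>. True} \<union> {proj_pt (1, 0, 1, 0)}"
    unfolding L_def by (rule line_through_ell_mu)
  then have R_inf_in_L: "proj_pt (1, 0, 1, 0) \<in> L"
    by simp
  have disjoint: "L \<inter> cubic = {}"
    using line mu proj_pt_R_mu_gamma_notin_cubic proj_pt_R_inf_notin_cubic by auto
  have not_chord: "\<not> chord emb L"
    unfolding chord_def using disjoint real_chord_meets_cubic tangent_meets_cubic
      imag_chord_not_through_R_inf[OF hom] R_inf_in_L by blast
  have "proj_pt (1, 0, 1, 0) \<notin> osc (0 :: 'a)"
    by (simp add: proj_pt_R_inf_in_osc_iff)
  with R_inf_in_L have not_in_osc_0: "\<not> L \<subseteq> osc 0"
    by blast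
  have R_not_osc_inf: "\<forall>\<gamma>. proj_pt (\<gamma>, \<mu>, \<gamma>, 1) \<notin> osc_inf"
    by (simp add: proj_pt_in_osc_inf_iff)
  have "proj_pt (0, \<mu>, 0, 1) \<in> L"
    using line by blast
  with R_not_osc_inf have not_in_osc_inf: "\<not> L \<subseteq> osc_inf"
    by blast
  have "(\<forall>t::'a. proj_pt (1, 0, 1, 0) \<notin> osc t) \<longrightarrow> (\<forall>t. \<not> L \<subseteq> osc t) \<and> \<not> L \<subseteq> osc_inf"
    using R_inf_in_L not_in_osc_inf by blast
  with line disjoint not_chord not_in_osc_inf not_in_osc_0 R_not_osc_inf show ?thesis
    by (intro conjI) (assumption | simp add: proj_pt_R_inf_in_osc_iff proj_pt_R_inf_in_osc_inf)+
qed

end
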